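(* For all $n\ge 2$, \[\left|\mathrm{Av}_n[\overline{12}34]\right|=\left|\mathrm{Av}_n[\overline{12}43]\right|=1+\sum_{i=0}^{n-2} i\,(i+1)^{n-i-2}.\]
   Context: For $\sigma\in S_n$, the cyclic permutation $[\sigma]$ is the set of all rotations of $\sigma$; $[S_n]$ is the set of cyclic permutations of length $n$. A vincular pattern is a permutation $\pi\in S_k$ with some pairs of adjacent positions joined by an overline; a linear permutation $\tau$ contains it if $\tau$ has a subsequence order-isomorphic to $\pi$ whose entries corresponding to overlined adjacent positions are adjacent in $\tau$. $[\sigma]$ contains $[\pi]$ if some rotation of $\sigma$ contains $\pi$. For example $[\overline{12}34]$ is contained in $[\sigma]$ iff some rotation of $\sigma$ has entries $a,b,c,d$ in this order with $a,b$ adjacent and $a<b<c<d$. $\mathrm{Av}_n[\pi]$ is the set of $[\sigma]\in[S_n]$ avoiding $[\pi]$. *)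

theory Defs
  imports Main
begin

definition lin_perms :: "nat \<Rightarrow> nat list set" where
  "lin_perms n = {xs. distinct xs \<and> set xs = {1..n}}"

text \<open>The cyclic permutation [sigma]: the set of all rotations of sigma.\<close>
definition cyc :: "nat list \<Rightarrow> nat list set" where
  "cyc \<sigma> = {rotate k \<sigma> | k. k < length \<sigma>}"

definition cyc_perms :: "nat \<Rightarrow> nat list set set" where
  "cyc_perms n = cyc ` lin_perms n"

text \<open>A vincular pattern is a pattern pi (a permutation in one-line notation) together
  with the set adj of (0-based) positions i such that positions i and i+1 are joined
  by an overline.\<close>
definition contains_vinc :: "nat list \<Rightarrow> nat list \<Rightarrow> nat set \<Rightarrow> bool" where
  "contains_vinc \<tau> \<pi> adj \<longleftrightarrow>
     (\<exists>is. length is = length \<pi> \<and> sorted_wrt (<) is \<and> (\<forall>j\<in>set is. j < length \<tau>) \<and>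
        (\<forall>a<length \<pi>. \<forall>b<length \<pi>. (\<tau> ! (is ! a) < \<tau> ! (is ! b)) \<longleftrightarrow> (\<pi> ! a < \<pi> ! b)) \<and>
        (\<forall>i\<in>adj. Suc i < length \<pi> \<longrightarrow> is ! Suc i = Suc (is ! i)))"

definition cyc_contains :: "nat list set \<Rightarrow> nat list \<Rightarrow> nat set \<Rightarrow> bool" where
  "cyc_contains C \<pi> adj \<longleftrightarrow> (\<exists>\<sigma>\<in>C. contains_vinc \<sigma> \<pi> adj)"

definition cyc_Av :: "nat \<Rightarrow> nat list \<Rightarrow> nat set \<Rightarrow> nat list set set" where
  "cyc_Av n \<pi> adj = {C \<in> cyc_perms n. \<not> cyc_contains C \<pi> adj}"

end

(*
  Every cyclic permutation has exactly one rotation w = n w_1 ... w_{n-1} that starts with its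
  largest entry n, so it suffices to count such words. As n is the maximum, an occurrence of
  [\overline{12}34] or [\overline{12}43] in a rotation of w starts at an ascent w_j < w_{j+1} with
  j >= 1, and its last two entries are taken from w_{j+2} ... w_{n-1} n w_1 ... w_{j-1}. This turns
  cyclic avoidance into a condition on the ascents of w.

  Let b be the smallest top of an ascent of w (b = n if there is none). The avoiders of
  [\overline{12}34] with this b are the words in which every ascent ends in {b, ..., n}, these
  entries appear in decreasing order, and b is not immediately preceded by b + 1; for
  [\overline{12}43] the entries b, ..., n - 1 appear in increasing order after n instead, and b is
  not immediately preceded by n. Inserting b - 1, ..., 1 one at a time, each new smallest letter
  can go directly before any of the n + 1 - b large letters except n, or at the end; so there are
  (n + 1 - b)^(b - 1) such words, and merging the forbidden pair into one letter shows that
  (n - b)^(b - 1) of them contain it. Summing over b gives the formula.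
*)
theory Submission
  imports Defs
begin

section \<open>Rotations starting with the largest entry\<close>

lemma cyc_eq_range_rotate:
  assumes "xs \<noteq> []"
  shows "cyc xs = range (\<lambda>i. rotate i xs)"
proof -
  have "rotate i xs \<in> cyc xs" for i
    using assms unfolding cyc_def
    by (metis (mono_tags) rotate_conv_mod length_greater_0_conv mod_less_divisor mem_Collect_eq)
  then show ?thesis unfolding cyc_def by blast
qed

lemma cyc_rotate:
  assumes "xs \<noteq> []"
  shows "cyc (rotate k xs) = cyc xs"
proof -
  let ?l = "length xs"
  have "rotate i xs = rotate (i + ?l * k - k) (rotate k xs)" for i
  proof -
    have "k \<le> ?l * k" using assms by (cases xs) auto
    then have "i + ?l * k - k + k = i + ?l * k" by linarith
    then have "rotate (i + ?l * k - k) (rotate k xs) = rotate (i + ?l * k) xs"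
      by (simp add: rotate_rotate)
    also have "\<dots> = rotate i xs"
      by (metis rotate_conv_mod mod_mult_self2)
    finally show ?thesis by simp
  qed
  then show ?thesis
    using assms by (auto simp: cyc_eq_range_rotate rotate_rotate)
qed

lemma length_lin_perms: "w \<in> lin_perms n \<Longrightarrow> length w = n"
  unfolding lin_perms_def
  by (metis (mono_tags) card_atLeastAtMost diff_Suc_1 distinct_card mem_Collect_eq)

lemma cyc_contains_iff_rotate:
  "cyc_contains (cyc w) \<pi> adj \<longleftrightarrow> (\<exists>k<length w. contains_vinc (rotate k w) \<pi> adj)"
  unfolding cyc_contains_def cyc_def by blast

lemma inj_on_cyc_max_first:
  assumes "1 \<le> n"
  shows "inj_on cyc {w \<in> lin_perms n. hd w = n}"
proof (rule inj_onI)
  fix w v assume w: "w \<in> {w \<in> lin_perms n. hd w = n}" and v: "v \<in> {w \<in> lin_perms n. hd w = n}"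
    and eq: "cyc w = cyc v"
  have "length w = n" "length v = n"
    using w v by (simp_all add: length_lin_perms)
  then have ne: "w \<noteq> []" "v \<noteq> []"
    using assms by auto
  have "w \<in> cyc w"
    using ne(1) unfolding cyc_def by (intro CollectI exI[of _ 0]) simp
  then have "w \<in> cyc v" using eq by simp
  then obtain k where k: "w = rotate k v" "k < length v"
    unfolding cyc_def by blast
  have "v ! k = v ! 0"
    using k ne w v by (simp add: nth_rotate hd_conv_nth)
  then have "k = 0"
    using k v ne by (simp add: lin_perms_def nth_eq_iff_index_eq)
  then show "w = v" using k by simp
qed

lemma card_cyc_Av_max_first:
  assumes "1 \<le> n"
  shows "card (cyc_Av n \<pi> adj) = card {w \<in> lin_perms n. hd w = n \<and> \<not> cyc_contains (cyc w) \<pi> adj}"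
    (is "_ = card ?H")
proof -
  have "cyc_Av n \<pi> adj \<subseteq> cyc ` ?H"
  proof
    fix C assume "C \<in> cyc_Av n \<pi> adj"
    then obtain \<sigma> where \<sigma>: "\<sigma> \<in> lin_perms n" "C = cyc \<sigma>" "\<not> cyc_contains C \<pi> adj"
      unfolding cyc_Av_def cyc_perms_def by blast
    have "n \<in> set \<sigma>" using \<sigma>(1) assms by (simp add: lin_perms_def)
    then obtain k where k: "k < length \<sigma>" "\<sigma> ! k = n"
      by (metis in_set_conv_nth)
    have ne: "\<sigma> \<noteq> []" using k by auto
    have "hd (rotate k \<sigma>) = n"
      using k ne by (simp add: hd_conv_nth nth_rotate)
    moreover have "rotate k \<sigma> \<in> lin_perms n"
      using \<sigma>(1) by (simp add: lin_perms_def)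
    moreover have C: "cyc (rotate k \<sigma>) = C"
      using \<sigma>(2) ne by (simp add: cyc_rotate)
    ultimately have "rotate k \<sigma> \<in> ?H"
      using \<sigma>(3) by simp
    then show "C \<in> cyc ` ?H"
      unfolding C[symmetric] by (rule imageI)
  qed
  moreover have "cyc ` ?H \<subseteq> cyc_Av n \<pi> adj"
    unfolding cyc_Av_def cyc_perms_def by blast
  ultimately have "cyc_Av n \<pi> adj = cyc ` ?H" by (rule antisym)
  moreover have "inj_on cyc ?H"
    using inj_on_cyc_max_first[OF assms] by (rule inj_on_subset) auto
  then have "card (cyc ` ?H) = card ?H" by (rule card_image)
  ultimately show ?thesis by (simp only:)
qed

lemma max_first_lin_perms_iff:
  assumes "1 \<le> n"
  shows "w \<in> lin_perms n \<and> hd w = n \<longleftrightarrow> length w = n \<and> distinct w \<and> set w = {1..n} \<and> w ! 0 = n"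
proof -
  have "w \<noteq> []" if "length w = n" using that assms by auto
  then show ?thesis
    using length_lin_perms[of w n] by (auto simp: lin_perms_def hd_conv_nth)
qed

section \<open>Occurrences in rotations\<close>

lemma contains_vinc_adjacent_first_four:
  assumes "length \<pi> = 4"
  shows "contains_vinc \<tau> \<pi> {0} \<longleftrightarrow>
    (\<exists>i l1 l2. Suc i < l1 \<and> l1 < l2 \<and> l2 < length \<tau> \<and>
      (\<forall>a<4. \<forall>b<4. \<tau> ! ([i, Suc i, l1, l2] ! a) < \<tau> ! ([i, Suc i, l1, l2] ! b) \<longleftrightarrow> \<pi> ! a < \<pi> ! b))"
  (is "_ \<longleftrightarrow> (\<exists>i l1 l2. ?occ i l1 l2)")
proof
  assume "contains_vinc \<tau> \<pi> {0}"
  then obtain "is" where "is": "length is = 4" "sorted_wrt (<) is" "\<forall>j\<in>set is. j < length \<tau>"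
      "\<forall>a<4. \<forall>b<4. \<tau> ! (is ! a) < \<tau> ! (is ! b) \<longleftrightarrow> \<pi> ! a < \<pi> ! b" "is ! 1 = Suc (is ! 0)"
    unfolding contains_vinc_def using assms by auto
  then obtain i l1 l2 where "is = [i, Suc i, l1, l2]"
    by (auto simp: length_Suc_conv numeral_eq_Suc)
  with "is" have "?occ i l1 l2" by auto
  then show "\<exists>i l1 l2. ?occ i l1 l2" by blast
next
  assume "\<exists>i l1 l2. ?occ i l1 l2"
  then obtain i l1 l2 where "?occ i l1 l2" by blast
  then show "contains_vinc \<tau> \<pi> {0}"
    unfolding contains_vinc_def using assms by (intro exI[of _ "[i, Suc i, l1, l2]"]) auto
qed

lemma contains_vinc_1234:
  "contains_vinc \<tau> [1,2,3,4] {0} \<longleftrightarrow>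
    (\<exists>i l1 l2. Suc i < l1 \<and> l1 < l2 \<and> l2 < length \<tau> \<and>
      \<tau> ! i < \<tau> ! Suc i \<and> \<tau> ! Suc i < \<tau> ! l1 \<and> \<tau> ! l1 < \<tau> ! l2)"
proof -
  have "(\<forall>a<4. \<forall>b<4. \<tau> ! ([i, Suc i, l1, l2] ! a) < \<tau> ! ([i, Suc i, l1, l2] ! b) \<longleftrightarrow>
          [1,2,3,4::nat] ! a < [1,2,3,4] ! b) \<longleftrightarrow>
        \<tau> ! i < \<tau> ! Suc i \<and> \<tau> ! Suc i < \<tau> ! l1 \<and> \<tau> ! l1 < \<tau> ! l2" for i l1 l2
    by (auto simp: numeral_eq_Suc All_less_Suc)
  then show ?thesis by (simp add: contains_vinc_adjacent_first_four)
qed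

lemma contains_vinc_1243:
  "contains_vinc \<tau> [1,2,4,3] {0} \<longleftrightarrow>
    (\<exists>i l1 l2. Suc i < l1 \<and> l1 < l2 \<and> l2 < length \<tau> \<and>
      \<tau> ! i < \<tau> ! Suc i \<and> \<tau> ! Suc i < \<tau> ! l2 \<and> \<tau> ! l2 < \<tau> ! l1)"
proof -
  have "(\<forall>a<4. \<forall>b<4. \<tau> ! ([i, Suc i, l1, l2] ! a) < \<tau> ! ([i, Suc i, l1, l2] ! b) \<longleftrightarrow>
          [1,2,4,3::nat] ! a < [1,2,4,3] ! b) \<longleftrightarrow>
        \<tau> ! i < \<tau> ! Suc i \<and> \<tau> ! Suc i < \<tau> ! l2 \<and> \<tau> ! l2 < \<tau> ! l1" for i l1 l2
    by (auto simp: numeral_eq_Suc All_less_Suc)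
  then show ?thesis by (simp add: contains_vinc_adjacent_first_four)
qed

lemma nth_rotate_if:
  assumes "k < length w" "m < length w"
  shows "rotate k w ! m = (if k + m < length w then w ! (k + m) else w ! (k + m - length w))"
  using assms by (simp add: nth_rotate mod_if)

lemma nth_rotate_shift:
  assumes "i + m < length w"
  shows "rotate ((k + i) mod length w) w ! m = rotate k w ! (i + m)"
  using assms by (simp add: nth_rotate mod_add_left_eq add.assoc)

lemma ex_rotation_occurrence_at_front:
  "(\<exists>k<length w. \<exists>i l1 l2. Suc i < l1 \<and> l1 < l2 \<and> l2 < length w \<and>
      Q (rotate k w ! i) (rotate k w ! Suc i) (rotate k w ! l1) (rotate k w ! l2)) \<longleftrightarrow>
   (\<exists>k<length w. \<exists>l1 l2. 1 < l1 \<and> l1 < l2 \<and> l2 < length w \<and>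
      Q (rotate k w ! 0) (rotate k w ! 1) (rotate k w ! l1) (rotate k w ! l2))"
  (is "?L \<longleftrightarrow> ?R")
proof
  assume ?L
  then obtain k i l1 l2 where occ: "Suc i < l1" "l1 < l2" "l2 < length w"
      "Q (rotate k w ! i) (rotate k w ! Suc i) (rotate k w ! l1) (rotate k w ! l2)"
    by blast
  let ?k = "(k + i) mod length w"
  have "rotate ?k w ! m = rotate k w ! (i + m)" if "i + m < length w" for m
    using that by (rule nth_rotate_shift)
  then have "Q (rotate ?k w ! 0) (rotate ?k w ! 1) (rotate ?k w ! (l1 - i)) (rotate ?k w ! (l2 - i))"
    using occ by simp
  moreover have "?k < length w"
    using occ by (intro mod_less_divisor) linarith
  moreover have "1 < l1 - i" "l1 - i < l2 - i" "l2 - i < length w"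
    using occ by auto
  ultimately show ?R by blast
next
  assume ?R
  then show ?L by fastforce
qed

text \<open>For w with w ! 0 = n, these are the conditions under which no occurrence starts at an
  ascent (j, Suc j); n = w ! 0 itself can only play the role of the largest pattern entry.\<close>

definition avoid_cond_1234 :: "nat \<Rightarrow> nat list \<Rightarrow> bool" where
  "avoid_cond_1234 n w \<longleftrightarrow> (\<forall>j. 1 \<le> j \<longrightarrow> Suc j < n \<longrightarrow> w ! j < w ! Suc j \<longrightarrow>
     (\<forall>t. Suc j < t \<longrightarrow> t < n \<longrightarrow> w ! t < w ! Suc j) \<and>
     (\<forall>s t. 1 \<le> s \<longrightarrow> s < t \<longrightarrow> t < j \<longrightarrow> \<not> (w ! Suc j < w ! s \<and> w ! s < w ! t)))"

definition avoid_cond_1243 :: "nat \<Rightarrow> nat list \<Rightarrow> bool" where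
  "avoid_cond_1243 n w \<longleftrightarrow> (\<forall>j. 1 \<le> j \<longrightarrow> Suc j < n \<longrightarrow> w ! j < w ! Suc j \<longrightarrow>
     (\<forall>s. 1 \<le> s \<longrightarrow> s < j \<longrightarrow> w ! s < w ! Suc j) \<and>
     (\<forall>s t. Suc j < s \<longrightarrow> s < t \<longrightarrow> t < n \<longrightarrow> \<not> (w ! Suc j < w ! t \<and> w ! t < w ! s)))"

lemma perm_nth_bounds:
  assumes "length w = n" "set w = {1..n}" "i < n"
  shows "1 \<le> w ! i" "w ! i \<le> n"
  using assms nth_mem[of i w] by auto

lemma ascent_index_pos:
  assumes "length w = n" "set w = {1..n}" "w ! 0 = n" "Suc j < n" "w ! j < w ! Suc j"
  shows "1 \<le> j"
proof (rule ccontr)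
  assume "\<not> 1 \<le> j"
  then have "j = 0" by simp
  then have "n < w ! 1" using assms(3,5) by simp
  then show False using perm_nth_bounds[OF assms(1,2), of 1] assms(4) by simp
qed

lemma front_ascent_of_max_first:
  assumes w: "length w = n" "set w = {1..n}" "w ! 0 = n"
    and occ: "k < n" "1 < l" "l < n" "rotate k w ! 0 < rotate k w ! 1" "rotate k w ! 1 < rotate k w ! l"
  shows "1 \<le> k" "Suc k < n" "w ! k < w ! Suc k"
proof -
  have r: "rotate k w ! m = (if k + m < n then w ! (k + m) else w ! (k + m - n))" if "m < n" for m
    using nth_rotate_if[of k w m] that occ(1) w(1) by simp
  have le: "rotate k w ! m \<le> n" if "m < n" for m
    using r[OF that] perm_nth_bounds[OF w(1,2)] occ(1) that by auto
  show "Suc k < n"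
  proof (rule ccontr)
    assume "\<not> Suc k < n"
    then have "rotate k w ! 1 = n" using r[of 1] occ w(3) by simp
    then show False using le[of l] occ by simp
  qed
  then show "w ! k < w ! Suc k"
    using r[of 0] r[of 1] occ by simp
  then show "1 \<le> k"
    using ascent_index_pos[OF w] \<open>Suc k < n\<close> by blast
qed

lemma not_avoid_cond_1234_if_front_occurrence:
  assumes w: "length w = n" "set w = {1..n}" "w ! 0 = n"
    and occ: "k < n" "1 < l1" "l1 < l2" "l2 < n" "rotate k w ! 0 < rotate k w ! 1"
      "rotate k w ! 1 < rotate k w ! l1" "rotate k w ! l1 < rotate k w ! l2"
  shows "\<not> avoid_cond_1234 n w"
proof
  assume cond: "avoid_cond_1234 n w"
  have r: "rotate k w ! m = (if k + m < n then w ! (k + m) else w ! (k + m - n))" if "m < n" for m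
    using nth_rotate_if[of k w m] that occ(1) w(1) by simp
  have le: "rotate k w ! m \<le> n" if "m < n" for m
    using r[OF that] perm_nth_bounds[OF w(1,2)] occ(1) that by auto
  have asc: "1 \<le> k" "Suc k < n" "w ! k < w ! Suc k"
    using front_ascent_of_max_first[OF w occ(1,2) _ occ(5,6)] occ(3,4) by auto
  have later: "w ! t < w ! Suc k" if "Suc k < t" "t < n" for t
    using cond asc that unfolding avoid_cond_1234_def by blast
  have earlier: "\<not> (w ! Suc k < w ! s \<and> w ! s < w ! t)" if "1 \<le> s" "s < t" "t < k" for s t
    using cond asc that unfolding avoid_cond_1234_def by blast
  consider "k + l1 < n" | "k + l1 = n" | "n < k + l1" by linarith
  then show False
  proof cases
    case 1
    then have "w ! (k + l1) < w ! Suc k"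
      using later occ by simp
    then show False using r[of 1] r[of l1] occ asc 1 by simp
  next
    case 2
    then show False using r[of l1] le[of l2] occ w(3) by simp
  next
    case 3
    then have "\<not> (w ! Suc k < w ! (k + l1 - n) \<and> w ! (k + l1 - n) < w ! (k + l2 - n))"
      using earlier occ by simp
    then show False using r[of 1] r[of l1] r[of l2] occ asc 3 by simp
  qed
qed

lemma front_occurrence_1234_if_not_avoid_cond:
  assumes w: "length w = n" "distinct w" "set w = {1..n}" "w ! 0 = n"
    and "\<not> avoid_cond_1234 n w"
  shows "\<exists>k<n. \<exists>l1 l2. 1 < l1 \<and> l1 < l2 \<and> l2 < n \<and> rotate k w ! 0 < rotate k w ! 1 \<and>
           rotate k w ! 1 < rotate k w ! l1 \<and> rotate k w ! l1 < rotate k w ! l2"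
proof -
  obtain j where j: "1 \<le> j" "Suc j < n" "w ! j < w ! Suc j" and
    viol: "(\<exists>t. Suc j < t \<and> t < n \<and> \<not> w ! t < w ! Suc j) \<or>
      (\<exists>s t. 1 \<le> s \<and> s < t \<and> t < j \<and> w ! Suc j < w ! s \<and> w ! s < w ! t)"
    using assms(5) unfolding avoid_cond_1234_def by blast
  have r: "rotate j w ! m = (if j + m < n then w ! (j + m) else w ! (j + m - n))" if "m < n" for m
    using nth_rotate_if[of j w m] that j w(1) by simp
  from viol show ?thesis
  proof
    assume "\<exists>t. Suc j < t \<and> t < n \<and> \<not> w ! t < w ! Suc j"
    then obtain t where t: "Suc j < t" "t < n" "\<not> w ! t < w ! Suc j" by blast
    have "w ! t \<noteq> w ! Suc j" "w ! t \<noteq> w ! 0"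
      using w(1,2) t j by (simp_all add: nth_eq_iff_index_eq)
    then have "w ! Suc j < w ! t" "w ! t < n"
      using t w perm_nth_bounds[OF w(1,3), of t] by auto
    then show ?thesis
      using j t r[of 0] r[of 1] r[of "t - j"] r[of "n - j"] w(4)
      by (intro exI[of _ j] conjI exI[of _ "t - j"] exI[of _ "n - j"]) auto
  next
    assume "\<exists>s t. 1 \<le> s \<and> s < t \<and> t < j \<and> w ! Suc j < w ! s \<and> w ! s < w ! t"
    then obtain s t where st: "1 \<le> s" "s < t" "t < j" "w ! Suc j < w ! s" "w ! s < w ! t" by blast
    then show ?thesis
      using j r[of 0] r[of 1] r[of "s + n - j"] r[of "t + n - j"]
      by (intro exI[of _ j] conjI exI[of _ "s + n - j"] exI[of _ "t + n - j"]) auto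
  qed
qed

lemma cyc_contains_1234_iff:
  assumes w: "length w = n" "distinct w" "set w = {1..n}" "w ! 0 = n"
  shows "cyc_contains (cyc w) [1,2,3,4] {0} \<longleftrightarrow> \<not> avoid_cond_1234 n w"
proof -
  have "cyc_contains (cyc w) [1,2,3,4] {0} \<longleftrightarrow>
      (\<exists>k<n. \<exists>l1 l2. 1 < l1 \<and> l1 < l2 \<and> l2 < n \<and> rotate k w ! 0 < rotate k w ! 1 \<and>
         rotate k w ! 1 < rotate k w ! l1 \<and> rotate k w ! l1 < rotate k w ! l2)"
    unfolding cyc_contains_iff_rotate contains_vinc_1234
    using ex_rotation_occurrence_at_front[of w "\<lambda>a b c d. a < b \<and> b < c \<and> c < d"] w(1)
    by simp
  also have "\<dots> \<longleftrightarrow> \<not> avoid_cond_1234 n w"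
    using not_avoid_cond_1234_if_front_occurrence[OF w(1,3,4)] front_occurrence_1234_if_not_avoid_cond[OF w]
    by blast
  finally show ?thesis .
qed

lemma not_avoid_cond_1243_if_front_occurrence:
  assumes w: "length w = n" "set w = {1..n}" "w ! 0 = n"
    and occ: "k < n" "1 < l1" "l1 < l2" "l2 < n" "rotate k w ! 0 < rotate k w ! 1"
      "rotate k w ! 1 < rotate k w ! l2" "rotate k w ! l2 < rotate k w ! l1"
  shows "\<not> avoid_cond_1243 n w"
proof
  assume cond: "avoid_cond_1243 n w"
  have r: "rotate k w ! m = (if k + m < n then w ! (k + m) else w ! (k + m - n))" if "m < n" for m
    using nth_rotate_if[of k w m] that occ(1) w(1) by simp
  have le: "rotate k w ! m \<le> n" if "m < n" for m
    using r[OF that] perm_nth_bounds[OF w(1,2)] occ(1) that by auto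
  have asc: "1 \<le> k" "Suc k < n" "w ! k < w ! Suc k"
    using front_ascent_of_max_first[OF w occ(1) _ occ(4,5,6)] occ(2,3) by auto
  have earlier: "w ! s < w ! Suc k" if "1 \<le> s" "s < k" for s
    using cond asc that unfolding avoid_cond_1243_def by blast
  have later: "\<not> (w ! Suc k < w ! t \<and> w ! t < w ! s)" if "Suc k < s" "s < t" "t < n" for s t
    using cond asc that unfolding avoid_cond_1243_def by blast
  consider "k + l2 < n" | "k + l2 = n" | "n < k + l2" by linarith
  then show False
  proof cases
    case 1
    then have "\<not> (w ! Suc k < w ! (k + l2) \<and> w ! (k + l2) < w ! (k + l1))"
      using later occ by simp
    then show False using r[of 1] r[of l1] r[of l2] occ asc 1 by simp
  next
    case 2
    then show False using r[of l2] le[of l1] occ w(3) by simp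
  next
    case 3
    then have "w ! (k + l2 - n) < w ! Suc k"
      using earlier occ by simp
    then show False using r[of 1] r[of l2] occ asc 3 by simp
  qed
qed

lemma front_occurrence_1243_if_not_avoid_cond:
  assumes w: "length w = n" "distinct w" "set w = {1..n}" "w ! 0 = n"
    and "\<not> avoid_cond_1243 n w"
  shows "\<exists>k<n. \<exists>l1 l2. 1 < l1 \<and> l1 < l2 \<and> l2 < n \<and> rotate k w ! 0 < rotate k w ! 1 \<and>
           rotate k w ! 1 < rotate k w ! l2 \<and> rotate k w ! l2 < rotate k w ! l1"
proof -
  obtain j where j: "1 \<le> j" "Suc j < n" "w ! j < w ! Suc j" and
    viol: "(\<exists>s. 1 \<le> s \<and> s < j \<and> \<not> w ! s < w ! Suc j) \<or>
      (\<exists>s t. Suc j < s \<and> s < t \<and> t < n \<and> w ! Suc j < w ! t \<and> w ! t < w ! s)"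
    using assms(5) unfolding avoid_cond_1243_def by blast
  have r: "rotate j w ! m = (if j + m < n then w ! (j + m) else w ! (j + m - n))" if "m < n" for m
    using nth_rotate_if[of j w m] that j w(1) by simp
  from viol show ?thesis
  proof
    assume "\<exists>s. 1 \<le> s \<and> s < j \<and> \<not> w ! s < w ! Suc j"
    then obtain s where s: "1 \<le> s" "s < j" "\<not> w ! s < w ! Suc j" by blast
    have "w ! s \<noteq> w ! Suc j" "w ! s \<noteq> w ! 0"
      using w(1,2) s j by (simp_all add: nth_eq_iff_index_eq)
    then have "w ! Suc j < w ! s" "w ! s < n"
      using s j w perm_nth_bounds[OF w(1,3), of s] by auto
    then show ?thesis
      using j s r[of 0] r[of 1] r[of "n - j"] r[of "s + n - j"] w(4)
      by (intro exI[of _ j] conjI exI[of _ "n - j"] exI[of _ "s + n - j"]) auto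
  next
    assume "\<exists>s t. Suc j < s \<and> s < t \<and> t < n \<and> w ! Suc j < w ! t \<and> w ! t < w ! s"
    then obtain s t where st: "Suc j < s" "s < t" "t < n" "w ! Suc j < w ! t" "w ! t < w ! s" by blast
    then show ?thesis
      using j r[of 0] r[of 1] r[of "s - j"] r[of "t - j"]
      by (intro exI[of _ j] conjI exI[of _ "s - j"] exI[of _ "t - j"]) auto
  qed
qed

lemma cyc_contains_1243_iff:
  assumes w: "length w = n" "distinct w" "set w = {1..n}" "w ! 0 = n"
  shows "cyc_contains (cyc w) [1,2,4,3] {0} \<longleftrightarrow> \<not> avoid_cond_1243 n w"
proof -
  have "cyc_contains (cyc w) [1,2,4,3] {0} \<longleftrightarrow>
      (\<exists>k<n. \<exists>l1 l2. 1 < l1 \<and> l1 < l2 \<and> l2 < n \<and> rotate k w ! 0 < rotate k w ! 1 \<and>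
         rotate k w ! 1 < rotate k w ! l2 \<and> rotate k w ! l2 < rotate k w ! l1)"
    unfolding cyc_contains_iff_rotate contains_vinc_1243
    using ex_rotation_occurrence_at_front[of w "\<lambda>a b c d. a < b \<and> b < d \<and> d < c"] w(1)
    by simp
  also have "\<dots> \<longleftrightarrow> \<not> avoid_cond_1243 n w"
    using not_avoid_cond_1243_if_front_occurrence[OF w(1,3,4)] front_occurrence_1243_if_not_avoid_cond[OF w]
    by blast
  finally show ?thesis .
qed

section \<open>Words with prescribed order and ascent tops\<close>

fun ascents_into :: "nat set \<Rightarrow> nat list \<Rightarrow> bool" where
  "ascents_into L (x # y # ys) = ((x < y \<longrightarrow> y \<in> L) \<and> ascents_into L (y # ys))"
| "ascents_into L _ = True"

lemma ascents_into_append: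
  "ascents_into L (xs @ ys) \<longleftrightarrow>
    ascents_into L xs \<and> ascents_into L ys \<and> (xs \<noteq> [] \<and> ys \<noteq> [] \<and> last xs < hd ys \<longrightarrow> hd ys \<in> L)"
proof (induction xs)
  case Nil then show ?case by simp
next
  case (Cons a xs)
  then show ?case by (cases xs; cases ys) auto
qed

lemma ascents_into_Cons:
  "ascents_into L (x # ys) \<longleftrightarrow> ascents_into L ys \<and> (ys \<noteq> [] \<and> x < hd ys \<longrightarrow> hd ys \<in> L)"
  by (cases ys) auto

lemma ascents_into_iff_nth:
  "ascents_into L w \<longleftrightarrow> (\<forall>i. Suc i < length w \<longrightarrow> w ! i < w ! Suc i \<longrightarrow> w ! Suc i \<in> L)"
proof (induction L w rule: ascents_into.induct)
  case (1 L x y ys)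
  then show ?case by (auto simp: nth_Cons split: nat.splits)
qed auto

lemma ascents_into_subset: "set w \<subseteq> L \<Longrightarrow> ascents_into L w"
  by (induction L w rule: ascents_into.induct) auto

lemma ascents_into_mono:
  "ascents_into L w \<Longrightarrow> L \<inter> set w \<subseteq> L' \<Longrightarrow> ascents_into L' w"
  by (induction L w rule: ascents_into.induct) auto

definition ascent_words :: "nat list \<Rightarrow> nat set \<Rightarrow> nat list set" where
  "ascent_words U S = {w. distinct w \<and> set w = set U \<union> S \<and> w \<noteq> [] \<and> hd w \<in> set U \<and>
                filter (\<lambda>x. x \<in> set U) w = U \<and> ascents_into (set U) w}"

lemma ascent_words_empty:
  assumes "distinct U" "U \<noteq> []"
  shows "ascent_words U {} = {U}"
proof
  show "ascent_words U {} \<subseteq> {U}"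
  proof
    fix w assume w: "w \<in> ascent_words U {}"
    then have "filter (\<lambda>x. x \<in> set U) w = w" by (auto simp: ascent_words_def)
    then show "w \<in> {U}" using w by (simp add: ascent_words_def)
  qed
  show "{U} \<subseteq> ascent_words U {}"
    using assms by (auto simp: ascent_words_def ascents_into_subset)
qed

lemma hd_filter_eq:
  assumes "w \<noteq> []" "hd w \<in> set U" "filter (\<lambda>x. x \<in> set U) w = U"
  shows "hd U = hd w"
proof -
  obtain b ws where b: "w = b # ws" using assms(1) by (cases w) auto
  then have "U = b # filter (\<lambda>x. x \<in> set U) ws" using assms by auto
  then show ?thesis using b by (metis list.sel(1))
qed

definition insert_before :: "nat \<Rightarrow> nat option \<Rightarrow> nat list \<Rightarrow> nat list" where
  "insert_before s opt w = (case opt of None \<Rightarrow> w @ [s]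
     | Some m \<Rightarrow> takeWhile (\<lambda>x. x \<noteq> m) w @ s # dropWhile (\<lambda>x. x \<noteq> m) w)"

definition successor :: "nat \<Rightarrow> nat list \<Rightarrow> nat option" where
  "successor s w = (case tl (dropWhile (\<lambda>x. x \<noteq> s) w) of [] \<Rightarrow> None | m # _ \<Rightarrow> Some m)"

lemma insert_before_split:
  "m \<notin> set p \<Longrightarrow> insert_before s (Some m) (p @ m # q) = p @ s # m # q"
  by (auto simp: insert_before_def takeWhile_append dropWhile_append)

lemma successor_split:
  "s \<notin> set p \<Longrightarrow> successor s (p @ s # q) = (case q of [] \<Rightarrow> None | m # _ \<Rightarrow> Some m)"
  by (auto simp: successor_def dropWhile_append)

lemma filter_insert_before:
  assumes "s \<notin> set w" "set_option opt \<subseteq> set w"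
  shows "filter (\<lambda>x. x \<noteq> s) (insert_before s opt w) = w"
proof (cases opt)
  case None
  then show ?thesis using assms by (auto simp: insert_before_def filter_id_conv)
next
  case (Some m)
  then obtain p q where pq: "w = p @ m # q" "m \<notin> set p"
    using assms(2) by (metis insert_subset option.set(2) split_list_first)
  moreover have "filter (\<lambda>x. x \<noteq> s) p = p" "filter (\<lambda>x. x \<noteq> s) q = q"
    using assms pq by (auto simp: filter_id_conv)
  ultimately show ?thesis using assms Some by (auto simp: insert_before_split)
qed

lemma successor_insert_before:
  assumes "s \<notin> set w" "set_option opt \<subseteq> set w"
  shows "successor s (insert_before s opt w) = opt"
proof (cases opt)
  case None
  then show ?thesis using assms by (simp add: insert_before_def successor_split)
next
  case (Some m)
  then obtain p q where pq: "w = p @ m # q" "m \<notin> set p"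
    using assms(2) by (metis insert_subset option.set(2) split_list_first)
  then show ?thesis using assms Some by (auto simp: insert_before_split successor_split)
qed

text \<open>Where a new smallest letter may go: directly before m (Some m), or at the end (None).\<close>

definition insert_slots :: "nat list \<Rightarrow> nat option set" where
  "insert_slots U = insert None (Some ` (set U - {hd U}))"

lemma card_insert_slots:
  assumes "distinct U" "U \<noteq> []"
  shows "card (insert_slots U) = length U"
proof -
  have "card (Some ` (set U - {hd U})) = length U - 1"
    using assms by (simp add: card_image distinct_card)
  then show ?thesis
    using assms unfolding insert_slots_def by (simp add: card_insert_if)
qed

lemma insert_before_in_ascent_words:
  assumes w: "w \<in> ascent_words U S" and o: "opt \<in> insert_slots U"
    and s: "s \<notin> set U" "s \<notin> S" "\<forall>x\<in>set U \<union> S. s < x"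
  shows "insert_before s opt w \<in> ascent_words U (insert s S)"
proof (cases opt)
  case None
  have "insert_before s opt w = w @ [s]" using None by (simp add: insert_before_def)
  moreover have "last w > s" using w s by (auto simp: ascent_words_def)
  ultimately show ?thesis using w s by (auto simp: ascent_words_def ascents_into_append)
next
  case (Some m)
  have m: "m \<in> set U" "m \<noteq> hd U" using o Some by (auto simp: insert_slots_def)
  have hdw: "hd U = hd w" using w by (auto simp: ascent_words_def hd_filter_eq)
  have "m \<in> set w" using m w by (auto simp: ascent_words_def)
  then obtain p q where pq: "w = p @ m # q" "m \<notin> set p" by (meson split_list_first)
  have pne: "p \<noteq> []" using pq hdw m by auto
  have e: "insert_before s opt w = p @ s # m # q" using pq Some by (simp add: insert_before_split)
  have "last p \<in> set w" using pq pne by auto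
  then have lp: "last p > s" using w s by (auto simp: ascent_words_def)
  have "ascents_into (set U) (p @ m # q)" using w pq by (simp add: ascent_words_def)
  then have "ascents_into (set U) (p @ s # m # q)"
    using lp m by (simp add: ascents_into_append ascents_into_Cons)
  moreover have "hd (p @ s # m # q) = hd w" using pq pne by simp
  ultimately show ?thesis using w s e pq by (auto simp: ascent_words_def)
qed

lemma ascent_words_insert_cases:
  assumes w: "w \<in> ascent_words U (insert s S)"
    and s: "s \<notin> set U" "s \<notin> S" "\<forall>x\<in>set U \<union> S. s < x"
  obtains w' opt where "w' \<in> ascent_words U S" "opt \<in> insert_slots U" "w = insert_before s opt w'"
proof -
  have "s \<in> set w" using w by (auto simp: ascent_words_def)
  then obtain p q where pq: "w = p @ s # q" by (meson split_list)
  have pne: "p \<noteq> []" using pq w s by (cases p) (auto simp: ascent_words_def)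
  have dw: "distinct w" using w by (simp add: ascent_words_def)
  have spq: "s \<notin> set p" "s \<notin> set q" using dw pq by auto
  have asc: "ascents_into (set U) (p @ s # q)" using w pq by (simp add: ascent_words_def)
  define w' where "w' = p @ q"
  have setw': "set w' = set U \<union> S" using w pq spq s by (auto simp: ascent_words_def w'_def)
  have fw': "filter (\<lambda>x. x \<in> set U) w' = U" using w pq s by (auto simp: ascent_words_def w'_def)
  show thesis
  proof (cases q)
    case Nil
    have "w' \<in> ascent_words U S"
      using w pq pne s setw' fw' asc Nil dw by (auto simp: ascent_words_def w'_def ascents_into_append)
    moreover have "w = insert_before s None w'" using pq Nil by (simp add: insert_before_def w'_def)
    ultimately show thesis using that unfolding insert_slots_def by blast
  next
    case (Cons m q')
    have "m \<in> set U \<union> S" using w pq Cons by (auto simp: ascent_words_def)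
    then have mU: "m \<in> set U" using asc Cons s by (simp add: ascents_into_append)
    have "m \<noteq> hd p" using dw pq Cons pne by auto
    moreover have "hd U = hd w" using w hd_filter_eq[of w U] by (simp add: ascent_words_def)
    then have "hd U = hd p" using pq pne by simp
    ultimately have o: "Some m \<in> insert_slots U" using mU by (simp add: insert_slots_def)
    have "ascents_into (set U) (p @ q)"
      using asc Cons mU by (simp add: ascents_into_append ascents_into_Cons)
    then have "w' \<in> ascent_words U S" using w pq pne s setw' fw' dw by (auto simp: ascent_words_def w'_def)
    moreover have "w = insert_before s (Some m) w'" using pq Cons dw by (simp add: insert_before_split w'_def)
    ultimately show thesis using o that by blast
  qed
qed

lemma bij_betw_insert_before:
  assumes s: "s \<notin> set U" "s \<notin> S" "\<forall>x\<in>set U \<union> S. s < x"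
  shows "bij_betw (\<lambda>(w, opt). insert_before s opt w)
           (ascent_words U S \<times> insert_slots U) (ascent_words U (insert s S))"
proof (rule bij_betw_imageI)
  have inv: "s \<notin> set w" "set_option opt \<subseteq> set w"
    if "w \<in> ascent_words U S" "opt \<in> insert_slots U" for w opt
    using that s by (auto simp: ascent_words_def insert_slots_def)
  show "inj_on (\<lambda>(w, opt). insert_before s opt w) (ascent_words U S \<times> insert_slots U)"
  proof (rule inj_onI, clarify)
    fix w opt w' opt'
    assume "w \<in> ascent_words U S" "opt \<in> insert_slots U" "w' \<in> ascent_words U S" "opt' \<in> insert_slots U"
      and eq: "insert_before s opt w = insert_before s opt' w'"
    then show "w = w' \<and> opt = opt'"
      using filter_insert_before[OF inv] successor_insert_before[OF inv] by metis
  qed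
  show "(\<lambda>(w, opt). insert_before s opt w) ` (ascent_words U S \<times> insert_slots U) = ascent_words U (insert s S)"
    using insert_before_in_ascent_words[OF _ _ s] ascent_words_insert_cases[OF _ s]
    by (auto simp: image_iff) metis
qed

lemma card_ascent_words:
  assumes "distinct U" "U \<noteq> []" "finite S" "\<forall>s\<in>S. \<forall>u\<in>set U. s < u"
  shows "card (ascent_words U S) = length U ^ card S"
  using assms(3,4)
proof (induction S rule: finite_linorder_min_induct)
  case empty
  then show ?case using assms by (simp add: ascent_words_empty)
next
  case (insert s S)
  have s: "s \<notin> set U" "s \<notin> S" "\<forall>x\<in>set U \<union> S. s < x"
    using insert by auto
  have "card (ascent_words U (insert s S)) = card (ascent_words U S \<times> insert_slots U)"
    using bij_betw_insert_before[OF s] by (simp add: bij_betw_same_card)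
  also have "\<dots> = length U ^ card S * length U"
    using insert assms by (simp add: card_cartesian_product card_insert_slots)
  finally show ?case
    using insert s by simp
qed

lemma hd_append_Cons_eq: "hd (p @ x # q) = hd (p @ x # r)"
  by (cases p) auto

lemma distinct_if_ascent_words: "w \<in> ascent_words U S \<Longrightarrow> distinct U"
  unfolding ascent_words_def by (metis (mono_tags) distinct_filter mem_Collect_eq)

lemma filter_remove_from_factor:
  assumes U: "U = U1 @ x # b # U2" "distinct U" and b: "b \<notin> set p" "b \<notin> set q"
    and f: "filter (\<lambda>y. y \<in> set U) (p @ x # b # q) = U"
  shows "filter (\<lambda>y. y \<in> set (U1 @ x # U2)) (p @ x # q) = U1 @ x # U2"
proof -
  have xU: "x \<in> set U" "x \<notin> set U1" "x \<notin> set (b # U2)" using U by auto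
  have "U1 @ x # b # U2 = filter (\<lambda>y. y \<in> set U) p @ x # b # filter (\<lambda>y. y \<in> set U) q"
    using f U(1) by simp
  then have fpq: "filter (\<lambda>y. y \<in> set U) p = U1" "filter (\<lambda>y. y \<in> set U) q = U2"
    using append_Cons_eq_iff[OF xU(2,3)] by auto
  have "filter (\<lambda>y. y \<in> set (U1 @ x # U2)) (p @ x # q) = filter (\<lambda>y. y \<in> set U) (p @ x # q)"
    using U b by (intro filter_cong) auto
  also have "\<dots> = filter (\<lambda>y. y \<in> set U) p @ x # filter (\<lambda>y. y \<in> set U) q"
    using xU(1) by simp
  finally show ?thesis using fpq by simp
qed

lemma remove_from_factor_in_ascent_words:
  assumes U: "U = U1 @ x # b # U2" and S: "\<forall>s\<in>S. \<forall>u\<in>set U. s < u"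
    and w: "p @ x # b # q \<in> ascent_words U S"
  shows "p @ x # q \<in> ascent_words (U1 @ x # U2) S"
proof -
  define U' where "U' = U1 @ x # U2"
  let ?w = "p @ x # b # q" and ?w' = "p @ x # q"
  have dw: "distinct ?w" using w by (simp add: ascent_words_def)
  have dU: "distinct U" using w by (rule distinct_if_ascent_words)
  then have setU: "set U = insert b (set U')" and bU': "b \<notin> set U'" and bS: "b \<notin> S"
    using U S by (auto simp: U'_def)
  have bpq: "b \<notin> set p" "b \<notin> set q" "b \<noteq> x" using dw by auto
  have "set ?w' = set ?w - {b}" using dw by auto
  then have sw': "set ?w' = set U' \<union> S" using w setU bU' bS by (auto simp: ascent_words_def)
  have "hd ?w' = hd ?w" by (rule hd_append_Cons_eq)
  moreover have "hd ?w \<noteq> b" using bpq by (cases p) auto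
  moreover have "hd ?w \<in> set U" using w by (simp add: ascent_words_def)
  ultimately have hw': "hd ?w' \<in> set U'" using setU by auto
  have fw': "filter (\<lambda>y. y \<in> set U') ?w' = U'"
    using filter_remove_from_factor[OF U dU bpq(1,2)] w by (simp add: ascent_words_def U'_def)
  have asc: "ascents_into (set U) p" "ascents_into (set U) q"
    using w by (auto simp: ascent_words_def ascents_into_append ascents_into_Cons)
  have "set U \<inter> set p \<subseteq> set U'" "set U \<inter> set q \<subseteq> set U'" using bpq unfolding setU by blast+
  then have "ascents_into (set U') p" "ascents_into (set U') q"
    using ascents_into_mono asc by blast+
  moreover have "hd q \<in> set U'" if "q \<noteq> []" "x < hd q"
  proof -
    have "hd q \<in> set U \<union> S" using w that by (auto simp: ascent_words_def)
    moreover have "hd q \<notin> S" using that S U by force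
    moreover have "hd q \<noteq> b" using that bpq by (metis hd_in_set)
    ultimately show ?thesis using setU by auto
  qed
  ultimately have "ascents_into (set U') ?w'"
    by (auto simp: U'_def ascents_into_append ascents_into_Cons)
  then show ?thesis
    using dw sw' hw' fw' by (auto simp: ascent_words_def U'_def)
qed

lemma insert_into_factor_in_ascent_words:
  assumes U: "U = U1 @ x # b # U2" "distinct U" and S: "\<forall>s\<in>S. \<forall>u\<in>set U. s < u"
    and w': "p @ x # q \<in> ascent_words (U1 @ x # U2) S"
  shows "p @ x # b # q \<in> ascent_words U S"
proof -
  define U' where "U' = U1 @ x # U2"
  let ?w = "p @ x # b # q" and ?w' = "p @ x # q"
  have setU: "set U = insert b (set U')" and bU': "b \<notin> set U'" and bS: "b \<notin> S"
    and xU1: "x \<notin> set U1" "x \<notin> set U2"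
    using U S by (auto simp: U'_def)
  have bw': "b \<notin> set ?w'" using w' bU' bS by (auto simp: ascent_words_def U'_def)
  then have dw: "distinct ?w" using w' by (auto simp: ascent_words_def)
  have sw: "set ?w = set U \<union> S" using w' setU by (auto simp: ascent_words_def U'_def)
  have hw: "hd ?w \<in> set U"
    using w' hd_append_Cons_eq[of p x q "b # q"] setU by (auto simp: ascent_words_def U'_def)
  have "U1 @ x # U2 = filter (\<lambda>y. y \<in> set U') p @ x # filter (\<lambda>y. y \<in> set U') q"
    using w' by (simp add: ascent_words_def U'_def)
  then have fpq: "filter (\<lambda>y. y \<in> set U') p = U1" "filter (\<lambda>y. y \<in> set U') q = U2"
    using append_Cons_eq_iff[OF xU1] by auto
  have "filter (\<lambda>y. y \<in> set U) p = filter (\<lambda>y. y \<in> set U') p"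
    "filter (\<lambda>y. y \<in> set U) q = filter (\<lambda>y. y \<in> set U') q"
    using bw' setU by (auto intro: filter_cong)
  moreover have "x \<in> set U" "b \<in> set U" using U by auto
  ultimately have fw: "filter (\<lambda>y. y \<in> set U) ?w = U"
    using fpq U(1) by simp
  have asc: "ascents_into (set U') p" "ascents_into (set U') q"
    using w' by (auto simp: ascent_words_def ascents_into_append ascents_into_Cons U'_def)
  have "set U' \<inter> set p \<subseteq> set U" "set U' \<inter> set q \<subseteq> set U" unfolding setU by blast+
  then have "ascents_into (set U) p" "ascents_into (set U) q"
    using ascents_into_mono asc by blast+
  moreover have "hd q \<in> set U" if "q \<noteq> []" "b < hd q"
  proof -
    have "hd q \<in> set U' \<union> S" using w' that by (auto simp: ascent_words_def U'_def)
    moreover have "hd q \<notin> S" using that S U by force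
    ultimately show ?thesis using setU by auto
  qed
  ultimately have "ascents_into (set U) ?w"
    using \<open>x \<in> set U\<close> \<open>b \<in> set U\<close>
    by (auto simp: ascents_into_append ascents_into_Cons)
  then show ?thesis using dw sw hw fw by (auto simp: ascent_words_def)
qed

definition insert_after :: "nat \<Rightarrow> nat \<Rightarrow> nat list \<Rightarrow> nat list" where
  "insert_after x b w = takeWhile (\<lambda>y. y \<noteq> x) w @ x # b # tl (dropWhile (\<lambda>y. y \<noteq> x) w)"

lemma insert_after_split: "x \<notin> set p \<Longrightarrow> insert_after x b (p @ x # q) = p @ x # b # q"
  by (auto simp: insert_after_def takeWhile_append dropWhile_append)

lemma card_ascent_words_with_factor:
  assumes U: "U = U1 @ x # b # U2" "distinct U" and S: "\<forall>s\<in>S. \<forall>u\<in>set U. s < u"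
  shows "card {w \<in> ascent_words U S. \<exists>p q. w = p @ x # b # q} = card (ascent_words (U1 @ x # U2) S)"
proof -
  let ?U' = "U1 @ x # U2"
  have split: "\<exists>p q. w' = p @ x # q \<and> x \<notin> set p" if "w' \<in> ascent_words ?U' S" for w'
    using that split_list_first[of x w'] by (auto simp: ascent_words_def)
  have "bij_betw (insert_after x b) (ascent_words ?U' S) {w \<in> ascent_words U S. \<exists>p q. w = p @ x # b # q}"
  proof (rule bij_betw_imageI)
    have "filter (\<lambda>y. y \<noteq> b) (insert_after x b w') = w'" if w': "w' \<in> ascent_words ?U' S" for w'
    proof -
      obtain p q where pq: "w' = p @ x # q" "x \<notin> set p" using split[OF w'] by blast
      have "b \<notin> set w'" using w' U S by (auto simp: ascent_words_def)
      then have "filter (\<lambda>y. y \<noteq> b) p = p" "filter (\<lambda>y. y \<noteq> b) q = q"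
        using pq by (auto simp: filter_id_conv)
      then show ?thesis using pq \<open>b \<notin> set w'\<close> by (simp add: insert_after_split)
    qed
    then show "inj_on (insert_after x b) (ascent_words ?U' S)"
      by (rule inj_on_inverseI)
    show "insert_after x b ` ascent_words ?U' S = {w \<in> ascent_words U S. \<exists>p q. w = p @ x # b # q}"
    proof (intro equalityI subsetI)
      fix w assume "w \<in> insert_after x b ` ascent_words ?U' S"
      then obtain w' where w': "w' \<in> ascent_words ?U' S" "w = insert_after x b w'" by blast
      obtain p q where "w' = p @ x # q" "x \<notin> set p" using split[OF w'(1)] by blast
      then have "w = p @ x # b # q" "p @ x # q \<in> ascent_words ?U' S"
        using w' by (simp_all add: insert_after_split)
      then show "w \<in> {w \<in> ascent_words U S. \<exists>p q. w = p @ x # b # q}"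
        using insert_into_factor_in_ascent_words[OF U S] by blast
    next
      fix w assume "w \<in> {w \<in> ascent_words U S. \<exists>p q. w = p @ x # b # q}"
      then obtain p q where w: "p @ x # b # q \<in> ascent_words U S" "w = p @ x # b # q" by blast
      then have "x \<notin> set p" by (auto simp: ascent_words_def)
      then have "w = insert_after x b (p @ x # q)" using w by (simp add: insert_after_split)
      then show "w \<in> insert_after x b ` ascent_words ?U' S"
        using remove_from_factor_in_ascent_words[OF U(1) S w(1)] by blast
    qed
  qed
  then show ?thesis by (simp add: bij_betw_same_card)
qed

lemma finite_ascent_words:
  assumes "distinct U" "U \<noteq> []" "finite S" "\<forall>s\<in>S. \<forall>u\<in>set U. s < u"
  shows "finite (ascent_words U S)"
  using card_ascent_words[OF assms] assms(2) by (metis card.infinite length_0_conv power_not_zero)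

lemma card_factor_free_ascent_words:
  assumes U: "U = U1 @ x # b # U2" "distinct U" and S: "finite S" "\<forall>s\<in>S. \<forall>u\<in>set U. s < u"
  shows "card {w \<in> ascent_words U S. \<not> (\<exists>p q. w = p @ x # b # q)} =
    length U ^ card S - (length U - 1) ^ card S"
proof -
  have "{w \<in> ascent_words U S. \<not> (\<exists>p q. w = p @ x # b # q)} =
      ascent_words U S - {w \<in> ascent_words U S. \<exists>p q. w = p @ x # b # q}"
    by blast
  moreover have "finite (ascent_words U S)"
    using U S by (intro finite_ascent_words) auto
  moreover have "card (ascent_words (U1 @ x # U2) S) = (length U - 1) ^ card S"
    using U S by (subst card_ascent_words) auto
  ultimately show ?thesis
    using U S card_ascent_words[of U S] card_ascent_words_with_factor[OF U S(2)]
    by (simp add: card_Diff_subset)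
qed

lemma factor_free_ascent_words_ascent:
  assumes U: "U = U1 @ x # b # U2" and S: "\<forall>s\<in>S. \<forall>u\<in>set U. s < u"
    and w: "w \<in> ascent_words U S" and free: "\<not> (\<exists>p q. w = p @ x # b # q)"
  obtains p a q where "w = p @ a # b # q" "a < b"
proof -
  have dw: "distinct w" using w by (simp add: ascent_words_def)
  have dU: "distinct U" using w by (rule distinct_if_ascent_words)
  have setw: "set w = set U \<union> S" using w by (simp add: ascent_words_def)
  have "b \<in> set w" using setw U by simp
  then obtain p q where pq: "w = p @ b # q" by (meson split_list)
  have "hd w = hd U"
    using w hd_filter_eq[of w U] by (simp add: ascent_words_def)
  moreover have "hd U \<noteq> b" using U dU by (cases U1) auto
  ultimately obtain p' a where p: "p = p' @ [a]"
    using pq by (metis append_self_conv2 list.sel(1) rev_exhaust)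
  have "a \<noteq> b" using dw pq p by auto
  moreover have "a = x" if "b < a"
  proof -
    have "a \<in> set w" using pq p by simp
    then have "a \<in> set U \<union> S" using setw by blast
    moreover have "b \<in> set U" using U by simp
    moreover have "a \<notin> S" using S \<open>b \<in> set U\<close> that by (meson less_asym)
    ultimately have "a \<in> set U" by blast
    then have "(filter (\<lambda>y. y \<in> set U) p' @ [a]) @ b # filter (\<lambda>y. y \<in> set U) q = (U1 @ [x]) @ b # U2"
      using w pq p U by (simp add: ascent_words_def)
    moreover have "b \<notin> set (U1 @ [x])" "b \<notin> set U2" using U dU by auto
    ultimately show "a = x" using append_Cons_eq_iff by (metis last_snoc)
  qed
  ultimately have "a < b" using free pq p by fastforce
  then show thesis using that pq p by simp
qed

lemma factor_free_ascent_words_disjoint: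
  assumes U: "U = U1 @ x # b # U2" and S: "\<forall>s\<in>S. \<forall>u\<in>set U. s < u" and b: "b \<notin> set V"
  shows "{w \<in> ascent_words U S. \<not> (\<exists>p q. w = p @ x # b # q)} \<inter> ascent_words V T = {}"
proof (rule equals0I)
  fix w assume "w \<in> {w \<in> ascent_words U S. \<not> (\<exists>p q. w = p @ x # b # q)} \<inter> ascent_words V T"
  then have w: "w \<in> ascent_words U S" "\<not> (\<exists>p q. w = p @ x # b # q)" "ascents_into (set V) w"
    by (auto simp: ascent_words_def)
  obtain p a q where "w = p @ a # b # q" "a < b"
    using factor_free_ascent_words_ascent[OF U S w(1,2)] by blast
  then have "b \<in> set V" using w(3) by (simp add: ascents_into_append ascents_into_Cons)
  then show False using b by simp
qed

lemma sorted_wrt_filter_nth: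
  assumes "sorted_wrt R (filter P xs)" "i < j" "j < length xs" "P (xs ! i)" "P (xs ! j)"
  shows "R (xs ! i) (xs ! j)"
proof -
  have "xs = take j xs @ xs ! j # drop (Suc j) xs"
    using assms(3) by (simp add: id_take_nth_drop)
  then have "sorted_wrt R (filter P (take j xs) @ xs ! j # filter P (drop (Suc j) xs))"
    using assms(1,5) by (metis filter.simps(2) filter_append)
  moreover have "xs ! i \<in> set (filter P (take j xs))"
    using nth_mem[of i "take j xs"] assms by simp
  ultimately show ?thesis
    by (simp add: sorted_wrt_append)
qed

lemma sorted_wrt_filter_if_nth:
  assumes "\<And>i j. i < j \<Longrightarrow> j < length xs \<Longrightarrow> P (xs ! i) \<Longrightarrow> P (xs ! j) \<Longrightarrow> R (xs ! i) (xs ! j)"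
  shows "sorted_wrt R (filter P xs)"
  using assms
proof (induction xs)
  case (Cons a xs)
  have "sorted_wrt R (filter P xs)"
    using Cons.prems[of "Suc _" "Suc _"] by (intro Cons.IH) simp
  moreover have "R a y" if "P a" "y \<in> set xs" "P y" for y
    using that Cons.prems[of 0 "Suc _"] by (auto simp: in_set_conv_nth)
  ultimately show ?case by auto
qed simp

lemma ascent_words_nth_order:
  assumes "w \<in> ascent_words U S" "sorted_wrt R U"
    and "i < j" "j < length w" "w ! i \<in> set U" "w ! j \<in> set U"
  shows "R (w ! i) (w ! j)"
  using assms sorted_wrt_filter_nth[of R "\<lambda>x. x \<in> set U" w i j]
  by (simp add: ascent_words_def)

lemma ascent_words_ascent_top:
  "w \<in> ascent_words U S \<Longrightarrow> Suc i < length w \<Longrightarrow> w ! i < w ! Suc i \<Longrightarrow> w ! Suc i \<in> set U"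
  by (auto simp: ascent_words_def ascents_into_iff_nth)

lemma ascent_words_Cons_nth_order:
  assumes w: "w \<in> ascent_words (u # V) S" and V: "sorted_wrt R V"
    and ij: "1 \<le> i" "i < j" "j < length w" "w ! i \<in> set (u # V)" "w ! j \<in> set (u # V)"
  shows "R (w ! i) (w ! j)"
proof -
  have "w \<noteq> []" "hd w = u" using w hd_filter_eq[of w "u # V"] by (auto simp: ascent_words_def)
  then have w_eq: "w = u # tl w" by (metis list.collapse)
  have "filter (\<lambda>x. x \<in> set (u # V)) w = u # V" using w by (simp add: ascent_words_def)
  then have "filter (\<lambda>x. x \<in> set (u # V)) (tl w) = V" by (subst (asm) w_eq) simp
  then have "sorted_wrt R (filter (\<lambda>x. x \<in> set (u # V)) (tl w))" using V by simp
  moreover have "tl w ! (i - 1) = w ! i" "tl w ! (j - 1) = w ! j"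
    using ij by (simp_all add: nth_tl)
  ultimately show ?thesis
    using sorted_wrt_filter_nth[of R _ "tl w" "i - 1" "j - 1"] ij by simp
qed

section \<open>Classes of avoiders by their smallest ascent top\<close>

definition min_ascent_top :: "nat \<Rightarrow> nat list \<Rightarrow> nat" where
  "min_ascent_top n w = Min (insert n {w ! Suc j | j. Suc j < length w \<and> w ! j < w ! Suc j})"

lemma finite_ascent_tops: "finite {w ! Suc j | j. Suc j < length w \<and> w ! j < w ! Suc j}"
  by (rule finite_subset[of _ "set w"]) auto

lemma min_ascent_top_le:
  "Suc j < length w \<Longrightarrow> w ! j < w ! Suc j \<Longrightarrow> min_ascent_top n w \<le> w ! Suc j"
  unfolding min_ascent_top_def using finite_ascent_tops by (intro Min_le) auto

lemma min_ascent_top_le_bound: "min_ascent_top n w \<le> n"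
  unfolding min_ascent_top_def using finite_ascent_tops by (intro Min_le) auto

lemma min_ascent_top_cases:
  "min_ascent_top n w = n \<or>
    (\<exists>j. Suc j < length w \<and> w ! j < w ! Suc j \<and> w ! Suc j = min_ascent_top n w)"
proof -
  have "min_ascent_top n w \<in> insert n {w ! Suc j | j. Suc j < length w \<and> w ! j < w ! Suc j}"
    unfolding min_ascent_top_def using finite_ascent_tops by (intro Min_in) auto
  then show ?thesis by auto
qed

lemma min_ascent_top_ge_1:
  assumes "set w = {1..n}" "1 \<le> n"
  shows "1 \<le> min_ascent_top n w"
  using min_ascent_top_cases[of n w] assms nth_mem by fastforce

lemma ascents_into_min_ascent_top:
  assumes "set w = {1..n}"
  shows "ascents_into {min_ascent_top n w..n} w"
  unfolding ascents_into_iff_nth using assms min_ascent_top_le nth_mem by fastforce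

lemma no_factor_above_ascent_top:
  fixes w :: "nat list"
  assumes "distinct w" "Suc j < length w" "w ! j < w ! Suc j" "w ! Suc j = b" "b < x"
  shows "\<not> (\<exists>p q. w = p @ x # b # q)"
proof
  assume "\<exists>p q. w = p @ x # b # q"
  then obtain p q where pq: "w = p @ x # b # q" by blast
  then have "w ! Suc (length p) = w ! Suc j" "Suc (length p) < length w"
    using assms(4) by (simp_all add: nth_append)
  then have "length p = j"
    using assms(1,2) nth_eq_iff_index_eq by fastforce
  then show False
    using pq assms(3-5) by (auto simp: nth_append)
qed

lemma factor_free_min_ascent_top:
  assumes "distinct w" "set w = {1..n}" "min_ascent_top n w < x \<or> x = n"
  shows "\<not> (\<exists>p q. w = p @ x # min_ascent_top n w # q)"
proof (cases "min_ascent_top n w = n")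
  case True
  then show ?thesis
  proof (cases "x = n")
    case False
    then have "x \<notin> set w" using True assms(2,3) by auto
    then have "\<forall>c. \<not> (\<exists>p q. w = p @ x # c # q)" by auto
    then show ?thesis by blast
  qed (use assms(1) True in auto)
next
  case False
  then obtain j where "Suc j < length w" "w ! j < w ! Suc j" "w ! Suc j = min_ascent_top n w"
    using min_ascent_top_cases[of n w] by blast
  moreover have "min_ascent_top n w < x"
    using assms(3) False min_ascent_top_le_bound[of n w] by auto
  ultimately show ?thesis
    using no_factor_above_ascent_top[OF assms(1)] by blast
qed

lemma ascent_words_if_filter_eq:
  assumes w: "distinct w" "set w = {1..n}" "w ! 0 = n" "1 \<le> n"
    and U: "set U = {min_ascent_top n w..n}" "filter (\<lambda>x. x \<in> set U) w = U"
  shows "w \<in> ascent_words U {1..<min_ascent_top n w}"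
proof -
  have "w \<noteq> []" using w(2,4) by auto
  then have "hd w = n" using w(3) by (simp add: hd_conv_nth)
  moreover have "set w = set U \<union> {1..<min_ascent_top n w}"
    using w(2) U(1) min_ascent_top_le_bound[of n w] min_ascent_top_ge_1[OF w(2,4)] by auto
  moreover have "ascents_into (set U) w"
    using ascents_into_min_ascent_top[OF w(2)] U(1) by simp
  ultimately show ?thesis
    using w(1) U \<open>w \<noteq> []\<close> min_ascent_top_le_bound[of n w] by (auto simp: ascent_words_def)
qed

lemma max_first_perm_if_ascent_words:
  assumes w: "w \<in> ascent_words U {1..<b}" and U: "set U = {b..n}" "hd U = n" and b: "1 \<le> b" "b \<le> n"
  shows "length w = n" "distinct w" "set w = {1..n}" "w ! 0 = n"
proof -
  show d: "distinct w" using w by (simp add: ascent_words_def)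
  show s: "set w = {1..n}" using w U b by (auto simp: ascent_words_def)
  show "length w = n" using d s by (metis card_atLeastAtMost diff_Suc_1 distinct_card)
  have "hd U = hd w" "w \<noteq> []" using w hd_filter_eq[of w U] by (auto simp: ascent_words_def)
  then show "w ! 0 = n" using U by (simp add: hd_conv_nth)
qed

text \<open>The words starting with n whose cyclic class avoids the pattern and whose smallest ascent
  top is b (see max_first_avoiders_1234 and max_first_avoiders_1243).\<close>

definition class_1234 :: "nat \<Rightarrow> nat \<Rightarrow> nat list set" where
  "class_1234 n b = {w \<in> ascent_words (rev [b..<Suc n]) {1..<b}. \<not> (\<exists>p q. w = p @ Suc b # b # q)}"

definition class_1243 :: "nat \<Rightarrow> nat \<Rightarrow> nat list set" where
  "class_1243 n b = {w \<in> ascent_words (n # [b..<n]) {1..<b}. \<not> (\<exists>p q. w = p @ n # b # q)}"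

lemma filter_eq_rev_upt_if_decreasing:
  assumes w: "length w = n" "set w = {1..n}" and b: "1 \<le> b"
    and dec: "\<And>i j. i < j \<Longrightarrow> j < n \<Longrightarrow> b \<le> w ! i \<Longrightarrow> b \<le> w ! j \<Longrightarrow> w ! j < w ! i"
  shows "filter (\<lambda>x. x \<in> set (rev [b..<Suc n])) w = rev [b..<Suc n]"
proof -
  let ?f = "filter (\<lambda>x. x \<in> set (rev [b..<Suc n])) w"
  have "sorted_wrt (>) ?f"
    using dec w(1) by (intro sorted_wrt_filter_if_nth) (simp del: upt_Suc)
  then have "sorted_wrt (<) (rev ?f)"
    by (simp add: sorted_wrt_rev)
  moreover have "set (rev ?f) = set [b..<Suc n]"
    using w(2) b by auto
  ultimately have "rev ?f = [b..<Suc n]"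
    using strict_sorted_equal[OF sorted_wrt_upt] by blast
  then show ?thesis
    by (simp add: rev_swap)
qed

lemma filter_eq_Cons_upt_if_increasing:
  assumes w: "length w = n" "distinct w" "set w = {1..n}" "w ! 0 = n" and b: "1 \<le> b" "b \<le> n"
    and inc: "\<And>i j. 1 \<le> i \<Longrightarrow> i < j \<Longrightarrow> j < n \<Longrightarrow> b \<le> w ! i \<Longrightarrow> b \<le> w ! j \<Longrightarrow> w ! i < w ! j"
  shows "filter (\<lambda>x. x \<in> set (n # [b..<n])) w = n # [b..<n]"
proof -
  let ?P = "\<lambda>x. x \<in> set (n # [b..<n])"
  have "w \<noteq> []" using w(1) b by auto
  then have w_eq: "w = n # tl w" using w(4) by (metis hd_Cons_tl hd_conv_nth)
  have "sorted_wrt (<) (filter ?P (tl w))"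
  proof (rule sorted_wrt_filter_if_nth)
    fix i j assume ij: "i < j" "j < length (tl w)" "?P (tl w ! i)" "?P (tl w ! j)"
    then have "Suc j < n" "b \<le> w ! Suc i" "b \<le> w ! Suc j"
      using w(1) b by (auto simp: nth_tl)
    then show "tl w ! i < tl w ! j"
      using inc[of "Suc i" "Suc j"] ij(1,2) by (simp add: nth_tl)
  qed
  moreover have "set (tl w) = {1..<n}"
  proof -
    have "insert n (set (tl w)) = {1..n}" using w(3) w_eq by (metis list.simps(15))
    moreover have "n \<notin> set (tl w)" using w(2) w_eq by (metis distinct.simps(2))
    ultimately have "set (tl w) = {1..n} - {n}" by (metis Diff_insert_absorb)
    also have "\<dots> = {1..<n}" by auto
    finally show ?thesis .
  qed
  then have "set (filter ?P (tl w)) = set [b..<n]"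
    using b by auto
  ultimately have "filter ?P (tl w) = [b..<n]"
    using strict_sorted_equal[OF sorted_wrt_upt] by blast
  then show ?thesis
    by (subst w_eq) simp
qed

lemma avoid_cond_1234_order:
  assumes w: "length w = n" "distinct w" "set w = {1..n}" "w ! 0 = n"
    and cond: "avoid_cond_1234 n w"
    and ij: "i < j" "j < n" "min_ascent_top n w \<le> w ! i" "min_ascent_top n w \<le> w ! j"
  shows "w ! j < w ! i"
proof -
  let ?b = "min_ascent_top n w"
  have dist: "w ! k \<noteq> w ! l" if "k < n" "l < n" "k \<noteq> l" for k l
    using w(1,2) that by (simp add: nth_eq_iff_index_eq)
  have le_n: "w ! k \<le> n" if "k < n" for k
    using perm_nth_bounds[OF w(1,3) that] by simp
  consider "?b = n" | j0 where "Suc j0 < n" "w ! j0 < w ! Suc j0" "w ! Suc j0 = ?b"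
    using min_ascent_top_cases[of n w] w(1) by auto
  then show ?thesis
  proof cases
    case 1
    then show ?thesis using ij le_n[of i] le_n[of j] dist[of i j] by simp
  next
    case 2
    then have j0: "1 \<le> j0" using ascent_index_pos[OF w(1,3,4)] by blast
    have after: "w ! t < ?b" if "Suc j0 < t" "t < n" for t
      using cond j0 2 that unfolding avoid_cond_1234_def by metis
    have before: "\<not> (?b < w ! s \<and> w ! s < w ! t)" if "1 \<le> s" "s < t" "t < j0" for s t
      using cond j0 2 that unfolding avoid_cond_1234_def by metis
    have "j \<le> Suc j0" using after[of j] ij by (meson leD not_le)
    moreover have "j \<noteq> j0" using ij 2 by auto
    moreover have "w ! i \<noteq> ?b" if "i \<noteq> Suc j0" using dist[of i "Suc j0"] 2 that ij by auto
    ultimately consider "j = Suc j0" | "j < j0" "i = 0" | "j < j0" "1 \<le> i" "?b < w ! i"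
      using ij by fastforce
    then show ?thesis
    proof cases
      case 1
      then show ?thesis using ij 2 dist[of i j] by fastforce
    next
      case 2
      then show ?thesis using ij w(4) le_n[of j] dist[of 0 j] by fastforce
    next
      case 3
      then show ?thesis using before[of i j] ij dist[of i j] by fastforce
    qed
  qed
qed

lemma avoid_cond_1243_order:
  assumes w: "length w = n" "distinct w" "set w = {1..n}" "w ! 0 = n"
    and cond: "avoid_cond_1243 n w"
    and ij: "1 \<le> i" "i < j" "j < n" "min_ascent_top n w \<le> w ! i" "min_ascent_top n w \<le> w ! j"
  shows "w ! i < w ! j"
proof -
  let ?b = "min_ascent_top n w"
  have dist: "w ! k \<noteq> w ! l" if "k < n" "l < n" "k \<noteq> l" for k l
    using w(1,2) that by (simp add: nth_eq_iff_index_eq)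
  have le_n: "w ! k \<le> n" if "k < n" for k
    using perm_nth_bounds[OF w(1,3) that] by simp
  consider "?b = n" | j0 where "Suc j0 < n" "w ! j0 < w ! Suc j0" "w ! Suc j0 = ?b"
    using min_ascent_top_cases[of n w] w(1) by auto
  then show ?thesis
  proof cases
    case 1
    then show ?thesis using ij le_n[of i] dist[of i 0] w(4) by simp
  next
    case 2
    then have j0: "1 \<le> j0" using ascent_index_pos[OF w(1,3,4)] by blast
    have before: "w ! s < ?b" if "1 \<le> s" "s < j0" for s
      using cond j0 2 that unfolding avoid_cond_1243_def by metis
    have after: "\<not> (?b < w ! t \<and> w ! t < w ! s)" if "Suc j0 < s" "s < t" "t < n" for s t
      using cond j0 2 that unfolding avoid_cond_1243_def by metis
    have "\<not> i < j0" using before[of i] ij by (meson leD)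
    moreover have "i \<noteq> j0" using 2 ij by auto
    ultimately have "Suc j0 \<le> i" by simp
    moreover have "?b < w ! j" using dist[of j "Suc j0"] 2 ij calculation by fastforce
    ultimately consider "i = Suc j0" | "Suc j0 < i"
      by linarith
    then show ?thesis
    proof cases
      case 1
      then show ?thesis using 2 \<open>?b < w ! j\<close> by simp
    next
      case 2
      then show ?thesis using after[of i j] ij dist[of i j] \<open>?b < w ! j\<close> by fastforce
    qed
  qed
qed

lemma class_1234_if_avoid_cond:
  assumes w: "length w = n" "distinct w" "set w = {1..n}" "w ! 0 = n" "1 \<le> n"
    and cond: "avoid_cond_1234 n w"
  shows "w \<in> class_1234 n (min_ascent_top n w)"
proof -
  let ?b = "min_ascent_top n w"
  let ?U = "rev [?b..<Suc n]"
  have "filter (\<lambda>x. x \<in> set ?U) w = ?U"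
    using avoid_cond_1234_order[OF w(1-4) cond] min_ascent_top_ge_1[OF w(3,5)]
    by (intro filter_eq_rev_upt_if_decreasing[OF w(1,3)])
  moreover have "set ?U = {?b..n}" by auto
  ultimately have "w \<in> ascent_words ?U {1..<?b}"
    by (intro ascent_words_if_filter_eq[OF w(2-5)])
  moreover have "\<not> (\<exists>p q. w = p @ Suc ?b # ?b # q)"
    using factor_free_min_ascent_top[OF w(2,3)] by simp
  ultimately show ?thesis
    by (simp add: class_1234_def)
qed

lemma class_1243_if_avoid_cond:
  assumes w: "length w = n" "distinct w" "set w = {1..n}" "w ! 0 = n" "1 \<le> n"
    and cond: "avoid_cond_1243 n w"
  shows "w \<in> class_1243 n (min_ascent_top n w)"
proof -
  let ?b = "min_ascent_top n w"
  let ?U = "n # [?b..<n]"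
  have "filter (\<lambda>x. x \<in> set ?U) w = ?U"
    using avoid_cond_1243_order[OF w(1-4) cond] min_ascent_top_ge_1[OF w(3,5)]
      min_ascent_top_le_bound[of n w]
    by (intro filter_eq_Cons_upt_if_increasing[OF w(1-4)])
  moreover have "set ?U = {?b..n}"
    using min_ascent_top_le_bound[of n w] by auto
  ultimately have "w \<in> ascent_words ?U {1..<?b}"
    by (intro ascent_words_if_filter_eq[OF w(2-5)])
  moreover have "\<not> (\<exists>p q. w = p @ n # ?b # q)"
    using factor_free_min_ascent_top[OF w(2,3)] by simp
  ultimately show ?thesis
    by (simp add: class_1243_def)
qed

lemma avoid_cond_1234_if_class:
  assumes w: "length w = n" "set w = {1..n}" and cls: "w \<in> class_1234 n b"
  shows "avoid_cond_1234 n w"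
proof -
  let ?U = "rev [b..<Suc n]"
  have asc_words: "w \<in> ascent_words ?U {1..<b}" using cls by (simp add: class_1234_def)
  have inU: "w ! i \<in> set ?U \<longleftrightarrow> b \<le> w ! i" if "i < n" for i
    using perm_nth_bounds[OF w that] by (simp del: upt_Suc)
  have srt: "sorted_wrt (>) ?U"
    using sorted_wrt_upt[of b "Suc n"] by (simp only: sorted_wrt_rev)
  have order: "w ! j < w ! i" if "i < j" "j < n" "b \<le> w ! i" "b \<le> w ! j" for i j
    using ascent_words_nth_order[OF asc_words srt, of i j] that inU[of i] inU[of j] w(1)
    by linarith
  have top: "b \<le> w ! Suc j" if "Suc j < n" "w ! j < w ! Suc j" for j
    using ascent_words_ascent_top[OF asc_words, of j] that inU[of "Suc j"] w(1) by simp
  show ?thesis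
    unfolding avoid_cond_1234_def
  proof (intro allI impI conjI)
    fix j t assume "1 \<le> j" "Suc j < n" "w ! j < w ! Suc j" "Suc j < t" "t < n"
    then show "w ! t < w ! Suc j"
      using order[of "Suc j" t] top[of j] by (cases "b \<le> w ! t") auto
  next
    fix j s t assume "1 \<le> j" "Suc j < n" "w ! j < w ! Suc j" "1 \<le> s" "s < t" "t < j"
    then show "\<not> (w ! Suc j < w ! s \<and> w ! s < w ! t)"
      using order[of s t] top[of j] by auto
  qed
qed

lemma avoid_cond_1243_if_class:
  assumes w: "length w = n" "set w = {1..n}" and cls: "w \<in> class_1243 n b" and b: "b \<le> n"
  shows "avoid_cond_1243 n w"
proof -
  let ?U = "n # [b..<n]"
  have asc_words: "w \<in> ascent_words ?U {1..<b}" using cls by (simp add: class_1243_def)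
  have inU: "w ! i \<in> set ?U \<longleftrightarrow> b \<le> w ! i" if "i < n" for i
    using perm_nth_bounds[OF w that] b by auto
  have order: "w ! i < w ! j" if "1 \<le> i" "i < j" "j < n" "b \<le> w ! i" "b \<le> w ! j" for i j
    using ascent_words_Cons_nth_order[OF asc_words sorted_wrt_upt, of i j] that inU[of i] inU[of j] w(1)
    by simp
  have top: "b \<le> w ! Suc j" if "Suc j < n" "w ! j < w ! Suc j" for j
    using ascent_words_ascent_top[OF asc_words, of j] that inU[of "Suc j"] w(1) by simp
  show ?thesis
    unfolding avoid_cond_1243_def
  proof (intro allI impI conjI)
    fix j s assume "1 \<le> j" "Suc j < n" "w ! j < w ! Suc j" "1 \<le> s" "s < j"
    then show "w ! s < w ! Suc j"
      using order[of s "Suc j"] top[of j] by (cases "b \<le> w ! s") auto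
  next
    fix j s t assume "1 \<le> j" "Suc j < n" "w ! j < w ! Suc j" "Suc j < s" "s < t" "t < n"
    then show "\<not> (w ! Suc j < w ! t \<and> w ! t < w ! s)"
      using order[of s t] top[of j] by auto
  qed
qed

text \<open>Telescoping, via i (i + 1)^k = (i + 1)^(k + 1) - (i + 1)^k.\<close>

lemma sum_power_differences:
  assumes "1 \<le> m"
  shows "(\<Sum>i\<le>m. (i + 1) ^ (m - i) - i ^ (m - i) :: nat) = 1 + (\<Sum>i<m. i * (i + 1) ^ (m - 1 - i))"
proof -
  define f where "f i = (i + 1) ^ (m - i)" for i :: nat
  define g where "g i = i ^ (m - i)" for i :: nat
  have g_le_f: "g i \<le> f i" for i by (simp add: f_def g_def power_mono)
  have step: "i * (i + 1) ^ (m - 1 - i) = f i - g (Suc i)" if i: "i < m" for i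
  proof -
    obtain d where "m = Suc (i + d)" using less_imp_Suc_add[OF i] by blast
    then show ?thesis by (simp add: f_def g_def diff_mult_distrib)
  qed
  have "(\<Sum>i\<le>m. f i - g i) = (\<Sum>i\<le>m. f i) - (\<Sum>i\<le>m. g i)"
    using g_le_f by (simp add: sum_subtractf_nat)
  also have "(\<Sum>i\<le>m. f i) = (\<Sum>i<m. f i) + 1"
    by (simp add: lessThan_Suc_atMost[symmetric] f_def)
  also have "(\<Sum>i\<le>m. g i) = (\<Sum>i<m. g (Suc i))"
    using assms by (simp add: sum.atMost_shift g_def)
  also have "(\<Sum>i<m. f i) + 1 - (\<Sum>i<m. g (Suc i)) = 1 + (\<Sum>i<m. f i - g (Suc i))"
  proof -
    have le: "g (Suc i) \<le> f i" for i
      by (simp add: f_def g_def power_increasing)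
    then have "(\<Sum>i<m. g (Suc i)) \<le> (\<Sum>i<m. f i)"
      by (intro sum_mono)
    moreover have "(\<Sum>i<m. f i - g (Suc i)) = (\<Sum>i<m. f i) - (\<Sum>i<m. g (Suc i))"
      using le by (simp add: sum_subtractf_nat)
    ultimately show ?thesis by linarith
  qed
  also have "(\<Sum>i<m. f i - g (Suc i)) = (\<Sum>i<m. i * (i + 1) ^ (m - 1 - i))"
    using step by simp
  finally show ?thesis by (simp add: f_def g_def)
qed

lemma sum_class_sizes:
  assumes "2 \<le> n"
  shows "(\<Sum>b=1..n. (Suc n - b) ^ (b - 1) - (n - b) ^ (b - 1)) = 1 + (\<Sum>i=0..n-2. i * (i + 1) ^ (n - i - 2))"
proof -
  have "(\<Sum>b=1..n. (Suc n - b) ^ (b - 1) - (n - b) ^ (b - 1)) =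
      (\<Sum>i\<le>n - 1. (i + 1) ^ (n - 1 - i) - i ^ (n - 1 - i))"
  proof (rule sum.reindex_bij_witness[of _ "\<lambda>i. n - i" "\<lambda>b. n - b"])
    fix b assume "b \<in> {1..n}"
    then have "n - b + 1 = Suc n - b" "n - 1 - (n - b) = b - 1" by auto
    then show "(n - b + 1) ^ (n - 1 - (n - b)) - (n - b) ^ (n - 1 - (n - b)) =
        (Suc n - b) ^ (b - 1) - (n - b) ^ (b - 1)"
      by (simp only:)
  qed (use assms in auto)
  also have "\<dots> = 1 + (\<Sum>i<n - 1. i * (i + 1) ^ (n - 1 - 1 - i))"
    using assms by (intro sum_power_differences) simp
  also have "(\<Sum>i<n - 1. i * (i + 1) ^ (n - 1 - 1 - i)) = (\<Sum>i=0..n-2. i * (i + 1) ^ (n - i - 2))"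
    using assms by (intro sum.cong) auto
  finally show ?thesis .
qed

lemma card_UN_classes:
  assumes n: "2 \<le> n"
    and fin: "\<And>b. b \<in> {1..n} \<Longrightarrow> finite (A b)"
    and disj: "\<And>b b'. b \<in> {1..n} \<Longrightarrow> b' \<in> {1..n} \<Longrightarrow> b \<noteq> b' \<Longrightarrow> A b \<inter> A b' = {}"
    and card: "\<And>b. b \<in> {1..n} \<Longrightarrow> card (A b) = (Suc n - b) ^ (b - 1) - (n - b) ^ (b - 1)"
  shows "card (\<Union>b\<in>{1..n}. A b) = 1 + (\<Sum>i=0..n-2. i * (i + 1) ^ (n - i - 2))"
proof -
  have "card (\<Union>b\<in>{1..n}. A b) = (\<Sum>b=1..n. card (A b))"
    using fin disj by (intro card_UN_disjoint) auto
  also have "\<dots> = (\<Sum>b=1..n. (Suc n - b) ^ (b - 1) - (n - b) ^ (b - 1))"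
    using card by simp
  finally show ?thesis using sum_class_sizes[OF n] by simp
qed

lemma rev_upt_split: "b < n \<Longrightarrow> rev [b..<Suc n] = rev [Suc (Suc b)..<Suc n] @ Suc b # b # []"
  by (simp add: upt_conv_Cons del: upt_Suc)

lemma Cons_upt_split: "b < n \<Longrightarrow> n # [b..<n] = [] @ n # b # [Suc b..<n]"
  by (simp add: upt_conv_Cons)

lemma finite_class_1234: "b \<le> n \<Longrightarrow> finite (class_1234 n b)"
  unfolding class_1234_def by (rule finite_subset[OF _ finite_ascent_words]) auto

lemma finite_class_1243: "b \<le> n \<Longrightarrow> finite (class_1243 n b)"
  unfolding class_1243_def by (rule finite_subset[OF _ finite_ascent_words]) auto

lemma card_class_1234:
  assumes b: "1 \<le> b" "b \<le> n" and n: "2 \<le> n"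
  shows "card (class_1234 n b) = (Suc n - b) ^ (b - 1) - (n - b) ^ (b - 1)"
proof (cases "b = n")
  case True
  have "\<not> (\<exists>p q. w = p @ Suc n # n # q)" if "w \<in> ascent_words [n] {1..<n}" for w
  proof -
    have "Suc n \<notin> set w" using that by (simp add: ascent_words_def)
    then show ?thesis by auto
  qed
  then have "class_1234 n b = ascent_words [n] {1..<n}"
    using True by (auto simp: class_1234_def)
  then show ?thesis
    using True n card_ascent_words[of "[n]" "{1..<n}"] by (simp add: power_0_left)
next
  case False
  then have "card (class_1234 n b) =
      length (rev [b..<Suc n]) ^ card {1..<b} - (length (rev [b..<Suc n]) - 1) ^ card {1..<b}"
    unfolding class_1234_def using b
    by (intro card_factor_free_ascent_words[OF rev_upt_split]) auto
  then show ?thesis by (simp del: upt_Suc)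
qed

lemma card_class_1243:
  assumes b: "1 \<le> b" "b \<le> n" and n: "2 \<le> n"
  shows "card (class_1243 n b) = (Suc n - b) ^ (b - 1) - (n - b) ^ (b - 1)"
proof (cases "b = n")
  case True
  have "\<not> (\<exists>p q. w = p @ n # n # q)" if "w \<in> ascent_words [n] {1..<n}" for w
  proof -
    have "distinct w" using that by (simp add: ascent_words_def)
    then show ?thesis by auto
  qed
  then have "class_1243 n b = ascent_words [n] {1..<n}"
    using True by (auto simp: class_1243_def)
  then show ?thesis
    using True n card_ascent_words[of "[n]" "{1..<n}"] by (simp add: power_0_left)
next
  case False
  then have "card (class_1243 n b) =
      length (n # [b..<n]) ^ card {1..<b} - (length (n # [b..<n]) - 1) ^ card {1..<b}"
    unfolding class_1243_def using b
    by (intro card_factor_free_ascent_words[OF Cons_upt_split]) auto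
  then show ?thesis using b by (simp add: Suc_diff_le)
qed

lemma class_1234_disjoint:
  assumes "b \<in> {1..n}" "b' \<in> {1..n}" "b \<noteq> b'"
  shows "class_1234 n b \<inter> class_1234 n b' = {}"
proof -
  have "class_1234 n c \<inter> class_1234 n c' = {}" if "1 \<le> c" "c < c'" "c' \<le> n" for c c'
  proof -
    have "{w \<in> ascent_words (rev [c..<Suc n]) {1..<c}. \<not> (\<exists>p q. w = p @ Suc c # c # q)} \<inter>
        ascent_words (rev [c'..<Suc n]) {1..<c'} = {}"
      using that by (intro factor_free_ascent_words_disjoint[OF rev_upt_split]) auto
    then show ?thesis by (auto simp: class_1234_def)
  qed
  then show ?thesis using assms by (metis Int_commute atLeastAtMost_iff linorder_neq_iff)
qed

lemma class_1243_disjoint: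
  assumes "b \<in> {1..n}" "b' \<in> {1..n}" "b \<noteq> b'"
  shows "class_1243 n b \<inter> class_1243 n b' = {}"
proof -
  have "class_1243 n c \<inter> class_1243 n c' = {}" if "1 \<le> c" "c < c'" "c' \<le> n" for c c'
  proof -
    have "{w \<in> ascent_words (n # [c..<n]) {1..<c}. \<not> (\<exists>p q. w = p @ n # c # q)} \<inter>
        ascent_words (n # [c'..<n]) {1..<c'} = {}"
      using that by (intro factor_free_ascent_words_disjoint[OF Cons_upt_split]) auto
    then show ?thesis by (auto simp: class_1243_def)
  qed
  then show ?thesis using assms by (metis Int_commute atLeastAtMost_iff linorder_neq_iff)
qed

lemma max_first_avoiders_1234:
  assumes n: "2 \<le> n"
  shows "{w \<in> lin_perms n. hd w = n \<and> \<not> cyc_contains (cyc w) [1,2,3,4] {0}} = (\<Union>b\<in>{1..n}. class_1234 n b)"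
proof (intro equalityI subsetI)
  fix w assume "w \<in> {w \<in> lin_perms n. hd w = n \<and> \<not> cyc_contains (cyc w) [1,2,3,4] {0}}"
  then have w: "length w = n" "distinct w" "set w = {1..n}" "w ! 0 = n"
    and free: "\<not> cyc_contains (cyc w) [1,2,3,4] {0}"
    using max_first_lin_perms_iff[of n w] n by auto
  then have "w \<in> class_1234 n (min_ascent_top n w)"
    using cyc_contains_1234_iff[OF w] class_1234_if_avoid_cond[OF w] n by simp
  moreover have "min_ascent_top n w \<in> {1..n}"
    using min_ascent_top_ge_1[OF w(3)] min_ascent_top_le_bound[of n w] n by simp
  ultimately show "w \<in> (\<Union>b\<in>{1..n}. class_1234 n b)" by blast
next
  fix w assume "w \<in> (\<Union>b\<in>{1..n}. class_1234 n b)"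
  then obtain b where b: "b \<in> {1..n}" "w \<in> class_1234 n b" by blast
  have asc: "w \<in> ascent_words (rev [b..<Suc n]) {1..<b}" using b by (simp add: class_1234_def)
  have U: "set (rev [b..<Suc n]) = {b..n}" "hd (rev [b..<Suc n]) = n"
    using b by (auto simp: hd_rev)
  have w: "length w = n" "distinct w" "set w = {1..n}" "w ! 0 = n"
    using max_first_perm_if_ascent_words[OF asc U] b by auto
  then have "\<not> cyc_contains (cyc w) [1,2,3,4] {0}"
    using cyc_contains_1234_iff[OF w] avoid_cond_1234_if_class[OF w(1,3) b(2)] by simp
  then show "w \<in> {w \<in> lin_perms n. hd w = n \<and> \<not> cyc_contains (cyc w) [1,2,3,4] {0}}"
    using max_first_lin_perms_iff[of n w] w n by simp
qed

lemma max_first_avoiders_1243: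
  assumes n: "2 \<le> n"
  shows "{w \<in> lin_perms n. hd w = n \<and> \<not> cyc_contains (cyc w) [1,2,4,3] {0}} = (\<Union>b\<in>{1..n}. class_1243 n b)"
proof (intro equalityI subsetI)
  fix w assume "w \<in> {w \<in> lin_perms n. hd w = n \<and> \<not> cyc_contains (cyc w) [1,2,4,3] {0}}"
  then have w: "length w = n" "distinct w" "set w = {1..n}" "w ! 0 = n"
    and free: "\<not> cyc_contains (cyc w) [1,2,4,3] {0}"
    using max_first_lin_perms_iff[of n w] n by auto
  then have "w \<in> class_1243 n (min_ascent_top n w)"
    using cyc_contains_1243_iff[OF w] class_1243_if_avoid_cond[OF w] n by simp
  moreover have "min_ascent_top n w \<in> {1..n}"
    using min_ascent_top_ge_1[OF w(3)] min_ascent_top_le_bound[of n w] n by simp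
  ultimately show "w \<in> (\<Union>b\<in>{1..n}. class_1243 n b)" by blast
next
  fix w assume "w \<in> (\<Union>b\<in>{1..n}. class_1243 n b)"
  then obtain b where b: "b \<in> {1..n}" "w \<in> class_1243 n b" by blast
  have asc: "w \<in> ascent_words (n # [b..<n]) {1..<b}" using b by (simp add: class_1243_def)
  have U: "set (n # [b..<n]) = {b..n}" "hd (n # [b..<n]) = n"
    using b by auto
  have w: "length w = n" "distinct w" "set w = {1..n}" "w ! 0 = n"
    using max_first_perm_if_ascent_words[OF asc U] b by auto
  then have "\<not> cyc_contains (cyc w) [1,2,4,3] {0}"
    using cyc_contains_1243_iff[OF w] avoid_cond_1243_if_class[OF w(1,3) b(2)] b(1) by simp
  then show "w \<in> {w \<in> lin_perms n. hd w = n \<and> \<not> cyc_contains (cyc w) [1,2,4,3] {0}}"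
    using max_first_lin_perms_iff[of n w] w n by simp
qed

theorem theorem5p4:
  fixes n :: nat
  assumes "n \<ge> 2"
  shows "card (cyc_Av n [1,2,3,4] {0}) = 1 + (\<Sum>i=0..n-2. i * (i+1)^(n-i-2))
       \<and> card (cyc_Av n [1,2,4,3] {0}) = 1 + (\<Sum>i=0..n-2. i * (i+1)^(n-i-2))"
proof
  have n: "1 \<le> n" using assms by simp
  show "card (cyc_Av n [1,2,3,4] {0}) = 1 + (\<Sum>i=0..n-2. i * (i+1)^(n-i-2))"
    unfolding card_cyc_Av_max_first[OF n] max_first_avoiders_1234[OF assms]
    using assms by (intro card_UN_classes) (auto simp: finite_class_1234 class_1234_disjoint card_class_1234)
  show "card (cyc_Av n [1,2,4,3] {0}) = 1 + (\<Sum>i=0..n-2. i * (i+1)^(n-i-2))"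
    unfolding card_cyc_Av_max_first[OF n] max_first_avoiders_1243[OF assms]
    using assms by (intro card_UN_classes) (auto simp: finite_class_1243 class_1243_disjoint card_class_1243)
qed

end
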